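(* Let $G$ be a real $n\times m$ matrix and $\mathbf v\in\mathbb R^n$, and let $\mathcal G=\{x\in\mathbb R^m: Gx\le \mathbf v\}$ (componentwise). Let $P$ be the nonnegative orthant of $\mathbb R^n$ and $F=\mathcal R(G)$. Let $\upsilon$ be the orthogonal projection of $\mathbf v$ onto $F^\perp$. Assume $\upsilon\ne0$ and $F\cap P=\{0\}$. Let $F_e=\mathrm{span}(\upsilon)+F$, and for $y\in F_e$ let $\beta(y)\in\mathbb R$ be the unique scalar such that $y-\beta(y)\upsilon\in F$. Then exactly one of the following three cases occurs. (a) $F_e\cap P=\{0\}$. In this case $\mathcal G=\emptyset$. (b) $F_e\cap P\neq\{0\}$ and $\beta(y)<0$ for every nonzero $y\in F_e\cap P$. In this case $\mathcal G=\emptyset$. (c) $F_e\cap P\neq\{0\}$ and $\beta(y)>0$ for every nonzero $y\in F_e\cap P$. In this case $\mathcal G\neq\emptyset$. *)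

theory Defs
  imports "HOL-Analysis.Analysis"
begin

definition orth_proj :: "'a::euclidean_space set \<Rightarrow> 'a \<Rightarrow> 'a" where
  "orth_proj S v = (THE u. u \<in> S \<and> v - u \<in> orthogonal_comp S)"

definition beta_coeff :: "'a::euclidean_space set \<Rightarrow> 'a \<Rightarrow> 'a \<Rightarrow> real" where
  "beta_coeff F u y = (THE b. y - b *\<^sub>R u \<in> F)"

definition nonneg_orthant :: "(real^'n) set" where
  "nonneg_orthant = {y. \<forall>i. 0 \<le> y $ i}"

end

theory Submission
  imports Defs
begin

text \<open>
  Since \<open>v - \<upsilon> \<in> F\<close>, a point \<open>x\<close> lies in \<open>\<G>\<close> iff \<open>y = v - G x\<close> is a nonnegative vector of
  \<open>F\<^sub>e\<close> with \<open>\<beta>(y) = 1\<close>; by rescaling, \<open>\<G> \<noteq> {}\<close> iff some \<open>y \<in> F\<^sub>e \<inter> P\<close> has \<open>\<beta>(y) > 0\<close>.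
  On the nonzero vectors of \<open>F\<^sub>e \<inter> P\<close> the coefficient \<open>\<beta>\<close> never vanishes, as \<open>F \<inter> P = {0}\<close>,
  and it cannot take both signs: if \<open>\<beta>(y\<^sub>1) > 0 > \<beta>(y\<^sub>2)\<close>, the nonnegative combination
  \<open>-\<beta>(y\<^sub>2) y\<^sub>1 + \<beta>(y\<^sub>1) y\<^sub>2\<close> has coefficient \<open>0\<close>, so it lies in \<open>F \<inter> P\<close> and vanishes; since \<open>P\<close>
  is a pointed cone, this forces \<open>y\<^sub>1 = 0\<close>.
\<close>

lemma subspace_range_matrix_vector_mult:
  fixes A :: "real^'m^'n"
  shows "subspace (range (\<lambda>x. A *v x))"
  by (rule linear_subspace_image[OF matrix_vector_mul_linear subspace_UNIV])

lemma orth_proj_decomp: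
  fixes S :: "'a::euclidean_space set"
  assumes "subspace S"
  shows "orth_proj S v \<in> S" and "v - orth_proj S v \<in> orthogonal_comp S"
proof -
  obtain s t where s: "s \<in> S" and t: "t \<in> orthogonal_comp S" and "v = s + t"
    using subspace_sum_orthogonal_comp[OF assms] set_plus_elim by (metis UNIV_I)
  have "\<exists>!u. u \<in> S \<and> v - u \<in> orthogonal_comp S"
  proof (rule ex1I[of _ s])
    show "s \<in> S \<and> v - s \<in> orthogonal_comp S" using s t \<open>v = s + t\<close> by simp
    fix u assume u: "u \<in> S \<and> v - u \<in> orthogonal_comp S"
    have "u - s \<in> S" using u s assms subspace_diff by blast
    moreover have "(v - s) - (v - u) \<in> orthogonal_comp S"
      using u t \<open>v = s + t\<close> subspace_orthogonal_comp subspace_diff by fastforce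
    ultimately have "u - s \<in> S \<inter> orthogonal_comp S" by simp
    then show "u = s" using orthogonal_Int_0[OF assms] by simp
  qed
  then have "orth_proj S v \<in> S \<and> v - orth_proj S v \<in> orthogonal_comp S"
    unfolding orth_proj_def by (rule theI')
  then show "orth_proj S v \<in> S" "v - orth_proj S v \<in> orthogonal_comp S" by simp_all
qed

lemma mem_span_singleton_plus:
  "y \<in> span {u} + F \<longleftrightarrow> (\<exists>c f. f \<in> F \<and> y = c *\<^sub>R u + f)"
  unfolding set_plus_def span_singleton by auto

lemma beta_coeff_scaleR_add:
  fixes F :: "'a::euclidean_space set"
  assumes "subspace F" and "u \<notin> F" and "f \<in> F"
  shows "beta_coeff F u (c *\<^sub>R u + f) = c"
  unfolding beta_coeff_def
proof (rule the_equality)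
  show "c *\<^sub>R u + f - c *\<^sub>R u \<in> F" using \<open>f \<in> F\<close> by simp
next
  fix b assume "c *\<^sub>R u + f - b *\<^sub>R u \<in> F"
  then have "(c - b) *\<^sub>R u + f - f \<in> F"
    using assms(1,3) subspace_diff by (fastforce simp: algebra_simps)
  then have "inverse (c - b) *\<^sub>R (c - b) *\<^sub>R u \<in> F"
    using assms(1) subspace_scale by fastforce
  then show "b = c" using \<open>u \<notin> F\<close> by (cases "b = c") auto
qed

lemma beta_coeff_zero:
  fixes F :: "'a::euclidean_space set"
  assumes "subspace F" and "u \<notin> F"
  shows "beta_coeff F u 0 = 0"
  using beta_coeff_scaleR_add[OF assms subspace_0[OF assms(1)], of 0] by simp

lemma beta_coeff_nonzero:
  fixes F P :: "'a::euclidean_space set"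
  assumes "subspace F" and "u \<notin> F" and "F \<inter> P = {0}"
    and "y \<in> (span {u} + F) \<inter> P" and "y \<noteq> 0"
  shows "beta_coeff F u y \<noteq> 0"
proof
  assume "beta_coeff F u y = 0"
  obtain c f where "f \<in> F" and y: "y = c *\<^sub>R u + f"
    using assms(4) mem_span_singleton_plus by blast
  with \<open>beta_coeff F u y = 0\<close> have "y = f"
    using beta_coeff_scaleR_add[OF assms(1,2)] by simp
  then show False using assms(3-5) \<open>f \<in> F\<close> by blast
qed

lemma beta_coeff_no_sign_change:
  fixes F P :: "'a::euclidean_space set"
  assumes "subspace F" and "u \<notin> F" and "F \<inter> P = {0}"
    and "convex_cone P" and pointed: "\<And>y. y \<in> P \<Longrightarrow> - y \<in> P \<Longrightarrow> y = 0"
    and y1: "y1 \<in> (span {u} + F) \<inter> P" "beta_coeff F u y1 > 0"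
    and y2: "y2 \<in> (span {u} + F) \<inter> P" "beta_coeff F u y2 < 0"
  shows False
proof -
  obtain c1 f1 c2 f2 where f1: "f1 \<in> F" "y1 = c1 *\<^sub>R u + f1"
    and f2: "f2 \<in> F" "y2 = c2 *\<^sub>R u + f2"
    using y1(1) y2(1) mem_span_singleton_plus by (metis IntD1)
  have c1: "c1 > 0" and c2: "c2 < 0"
    using y1(2) y2(2) f1 f2 beta_coeff_scaleR_add[OF assms(1,2)] by simp_all
  have P1: "(- c2) *\<^sub>R y1 \<in> P" and P2: "c1 *\<^sub>R y2 \<in> P"
    by (rule convex_cone_scaleR[OF \<open>convex_cone P\<close>]; use c1 c2 y1(1) y2(1) in simp)+
  have "(- c2) *\<^sub>R y1 + c1 *\<^sub>R y2 = (- c2) *\<^sub>R f1 + c1 *\<^sub>R f2"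
    using f1(2) f2(2) by (simp add: algebra_simps)
  also have "\<dots> \<in> F" using f1(1) f2(1) assms(1) subspace_add subspace_scale by blast
  finally have "(- c2) *\<^sub>R y1 + c1 *\<^sub>R y2 \<in> F \<inter> P"
    using P1 P2 convex_cone_add[OF \<open>convex_cone P\<close>] by blast
  then have "- ((- c2) *\<^sub>R y1) = c1 *\<^sub>R y2"
    using assms(3) by (simp add: eq_neg_iff_add_eq_0)
  then have "(- c2) *\<^sub>R y1 = 0" using pointed P1 P2 by metis
  then have "y1 = 0" using c2 by simp
  then show False using y1(2) beta_coeff_zero[OF assms(1,2)] by simp
qed

lemma beta_coeff_sign_constant:
  fixes F P :: "'a::euclidean_space set"
  assumes "subspace F" and "u \<notin> F" and "F \<inter> P = {0}"
    and "convex_cone P" and "\<And>y. y \<in> P \<Longrightarrow> - y \<in> P \<Longrightarrow> y = 0"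
  shows "(\<forall>y \<in> (span {u} + F) \<inter> P. y \<noteq> 0 \<longrightarrow> beta_coeff F u y > 0)
       \<or> (\<forall>y \<in> (span {u} + F) \<inter> P. y \<noteq> 0 \<longrightarrow> beta_coeff F u y < 0)"
proof (rule ccontr)
  assume "\<not> ?thesis"
  then obtain y1 y2 where
    y1: "y1 \<in> (span {u} + F) \<inter> P" "y1 \<noteq> 0" "\<not> beta_coeff F u y1 > 0" and
    y2: "y2 \<in> (span {u} + F) \<inter> P" "y2 \<noteq> 0" "\<not> beta_coeff F u y2 < 0"
    by blast
  have "beta_coeff F u y1 < 0" "beta_coeff F u y2 > 0"
    using y1 y2 beta_coeff_nonzero[OF assms(1-3)] by force+
  then show False using beta_coeff_no_sign_change[OF assms] y1(1) y2(1) by blast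
qed

lemma convex_cone_nonneg_orthant: "convex_cone nonneg_orthant"
  unfolding convex_cone_iff nonneg_orthant_def by simp

lemma nonneg_orthant_pointed:
  "y \<in> nonneg_orthant \<Longrightarrow> - y \<in> nonneg_orthant \<Longrightarrow> y = 0"
  unfolding nonneg_orthant_def by (simp add: vec_eq_iff order_antisym)

lemma polyhedron_nonempty_iff_beta_coeff_pos:
  fixes G :: "real^'m^'n" and v u :: "real^'n"
  defines "F \<equiv> range (\<lambda>x. G *v x)"
  assumes "v - u \<in> F" and "u \<notin> F"
  shows "{x. \<forall>i. (G *v x) $ i \<le> v $ i} \<noteq> {}
     \<longleftrightarrow> (\<exists>y \<in> (span {u} + F) \<inter> nonneg_orthant. beta_coeff F u y > 0)"
proof -
  have sF: "subspace F" unfolding F_def by (rule subspace_range_matrix_vector_mult)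
  note beta = beta_coeff_scaleR_add[OF sF \<open>u \<notin> F\<close>]
  show ?thesis
  proof
    assume "{x. \<forall>i. (G *v x) $ i \<le> v $ i} \<noteq> {}"
    then obtain x where x: "\<forall>i. (G *v x) $ i \<le> v $ i" by blast
    have f: "(v - u) - G *v x \<in> F"
      using assms(2) sF subspace_diff unfolding F_def by blast
    have y: "v - G *v x = 1 *\<^sub>R u + ((v - u) - G *v x)" by simp
    then have "v - G *v x \<in> span {u} + F"
      unfolding mem_span_singleton_plus using f by blast
    moreover have "v - G *v x \<in> nonneg_orthant"
      using x unfolding nonneg_orthant_def by simp
    moreover have "beta_coeff F u (v - G *v x) = 1"
      using beta[OF f] y by metis
    ultimately show "\<exists>y \<in> (span {u} + F) \<inter> nonneg_orthant. beta_coeff F u y > 0"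
      by force
  next
    assume "\<exists>y \<in> (span {u} + F) \<inter> nonneg_orthant. beta_coeff F u y > 0"
    then obtain y where y: "y \<in> span {u} + F" "y \<in> nonneg_orthant" "beta_coeff F u y > 0"
      by blast
    then obtain c f where f: "f \<in> F" "y = c *\<^sub>R u + f"
      unfolding mem_span_singleton_plus by blast
    have "c > 0" using y(3) beta[OF f(1)] f(2) by simp
    have "(v - u) - inverse c *\<^sub>R f \<in> F"
      using assms(2) f(1) sF subspace_diff subspace_scale by metis
    then obtain x where "G *v x = (v - u) - inverse c *\<^sub>R f" unfolding F_def by auto
    then have "G *v x = v - inverse c *\<^sub>R y"
      using f(2) \<open>c > 0\<close> by (simp add: algebra_simps)
    then have "\<forall>i. (G *v x) $ i \<le> v $ i"
      using y(2) \<open>c > 0\<close> unfolding nonneg_orthant_def by simp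
    then show "{x. \<forall>i. (G *v x) $ i \<le> v $ i} \<noteq> {}" by blast
  qed
qed

theorem mainTheorem4:
  fixes G :: "real^'m^'n" and v :: "real^'n"
  defines "\<G> \<equiv> {x :: real^'m. \<forall>i. (G *v x) $ i \<le> v $ i}"
      and "P \<equiv> (nonneg_orthant :: (real^'n) set)"
      and "F \<equiv> range (\<lambda>x. G *v x)"
  defines "\<upsilon> \<equiv> orth_proj (orthogonal_comp F) v"
  defines "Fe \<equiv> span {\<upsilon>} + F"
  defines "\<beta> \<equiv> beta_coeff F \<upsilon>"
  assumes "\<upsilon> \<noteq> 0"
      and "F \<inter> P = {0}"
  defines "caseA \<equiv> Fe \<inter> P = {0}"
      and "caseB \<equiv> Fe \<inter> P \<noteq> {0} \<and> (\<forall>y \<in> Fe \<inter> P. y \<noteq> 0 \<longrightarrow> \<beta> y < 0)"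
      and "caseC \<equiv> Fe \<inter> P \<noteq> {0} \<and> (\<forall>y \<in> Fe \<inter> P. y \<noteq> 0 \<longrightarrow> \<beta> y > 0)"
  shows "((caseA \<and> \<not> caseB \<and> \<not> caseC) \<or> (\<not> caseA \<and> caseB \<and> \<not> caseC)
           \<or> (\<not> caseA \<and> \<not> caseB \<and> caseC))
         \<and> (caseA \<longrightarrow> \<G> = {})
         \<and> (caseB \<longrightarrow> \<G> = {})
         \<and> (caseC \<longrightarrow> \<G> \<noteq> {})"
proof -
  have sF: "subspace F" unfolding F_def by (rule subspace_range_matrix_vector_mult)
  have "\<upsilon> \<in> orthogonal_comp F" and "v - \<upsilon> \<in> F"
    using orth_proj_decomp[OF subspace_orthogonal_comp] orthogonal_comp_self[OF sF]
    unfolding \<upsilon>_def by metis+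
  then have "\<upsilon> \<notin> F" using orthogonal_Int_0[OF sF] \<open>\<upsilon> \<noteq> 0\<close> by blast
  have signs: "(\<forall>y \<in> Fe \<inter> P. y \<noteq> 0 \<longrightarrow> \<beta> y > 0) \<or> (\<forall>y \<in> Fe \<inter> P. y \<noteq> 0 \<longrightarrow> \<beta> y < 0)"
    using beta_coeff_sign_constant[OF sF \<open>\<upsilon> \<notin> F\<close> _ convex_cone_nonneg_orthant]
      nonneg_orthant_pointed \<open>F \<inter> P = {0}\<close> unfolding Fe_def \<beta>_def P_def by blast
  have "\<G> \<noteq> {} \<longleftrightarrow> (\<exists>y \<in> Fe \<inter> P. \<beta> y > 0)"
    using polyhedron_nonempty_iff_beta_coeff_pos \<open>v - \<upsilon> \<in> F\<close> \<open>\<upsilon> \<notin> F\<close>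
    unfolding \<G>_def Fe_def P_def \<beta>_def F_def by blast
  with beta_coeff_zero[OF sF \<open>\<upsilon> \<notin> F\<close>]
  have feasible: "\<G> \<noteq> {} \<longleftrightarrow> (\<exists>y \<in> Fe \<inter> P. y \<noteq> 0 \<and> \<beta> y > 0)"
    unfolding \<beta>_def by (metis less_irrefl)
  have "0 \<in> Fe \<inter> P"
    using set_plus_intro[OF span_zero subspace_0[OF sF]]
    unfolding Fe_def P_def nonneg_orthant_def by simp
  then have "\<not> (caseB \<and> caseC)" and "caseA \<longrightarrow> \<G> = {}" and "caseC \<longrightarrow> \<G> \<noteq> {}"
    using feasible unfolding caseA_def caseB_def caseC_def by (blast dest: less_asym)+
  moreover have "caseB \<longrightarrow> \<G> = {}"
    using feasible unfolding caseB_def by force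
  ultimately show ?thesis
    using signs unfolding caseA_def caseB_def caseC_def by blast
qed

end
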